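(* Let $k\in\mathbb C$ be non-algebraic and $n,m\in\mathbb Z_{>0}$. Let $E$ be an $\mathcal E$-equivalence class (with respect to $p_0=n+k^{-1}m$), with minimal element $(\lambda_m,\mu_m)$ and maximal element $(\lambda_M,\mu_M)$, and let $\nu_1,\dots,\nu_r$ be the connected components of $\lambda_M\setminus\lambda_m$. For a set of boxes $\nu$ put $g_s(\nu)=\sum_{x\in\nu}c(x,0)^{s-1}$. Then the determinant $\det\big(g_s(\nu_t)\big)_{s,t=1}^{r}$ is nonzero.
   Context: Partitions are Young diagrams (finite sets of boxes $(i,j)\in\mathbb Z^2_{>0}$, $i$ = row, $j$ = column, closed under moving up or left); a bipartition is a pair of partitions; inclusion componentwise; connected components are with respect to boxes sharing an edge. For a box $x=(i,j)$, $c(x,a)=(j-1)+k(i-1)+a$; for $\alpha=(\lambda,\mu)$, $b_r(\alpha,k,p_0)=\sum_{x\in\lambda}c(x,0)^{r-1}+(-1)^r\sum_{y\in\mu}c(y,1+k-kp_0)^{r-1}$; bipartitions are $\mathcal E$-equivalent if all $b_r(\cdot,k,n+k^{-1}m)$, $r\ge1$, coincide. Each $\mathcal E$-class has a unique minimal and maximal element with respect to inclusion. *)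

theory Defs
  imports "HOL-Computational_Algebra.Polynomial" "Jordan_Normal_Form.Determinant"
begin

type_synonym box = "nat \<times> nat"
type_synonym bipartition = "box set \<times> box set"

text \<open>Young diagrams: finite sets of boxes (i,j) with i,j >= 1 (i = row, j = column),
closed under moving up or left.\<close>
definition is_partition :: "box set \<Rightarrow> bool" where
  "is_partition la \<longleftrightarrow> finite la \<and> (\<forall>(i,j)\<in>la. i \<ge> 1 \<and> j \<ge> 1) \<and>
     (\<forall>(i,j)\<in>la. (i > 1 \<longrightarrow> (i - 1, j) \<in> la) \<and> (j > 1 \<longrightarrow> (i, j - 1) \<in> la))"

definition is_bipartition :: "bipartition \<Rightarrow> bool" where
  "is_bipartition al \<longleftrightarrow> is_partition (fst al) \<and> is_partition (snd al)"

definition bip_le :: "bipartition \<Rightarrow> bipartition \<Rightarrow> bool" where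
  "bip_le al be \<longleftrightarrow> fst al \<subseteq> fst be \<and> snd al \<subseteq> snd be"

definition cont :: "complex \<Rightarrow> box \<Rightarrow> complex \<Rightarrow> complex" where
  "cont k x a = of_nat (snd x - 1) + k * of_nat (fst x - 1) + a"

definition b_fun :: "nat \<Rightarrow> bipartition \<Rightarrow> complex \<Rightarrow> complex \<Rightarrow> complex" where
  "b_fun r al k p0 =
     (\<Sum>x\<in>fst al. cont k x 0 ^ (r - 1))
     + (-1) ^ r * (\<Sum>y\<in>snd al. cont k y (1 + k - k * p0) ^ (r - 1))"

definition E_equiv :: "complex \<Rightarrow> nat \<Rightarrow> nat \<Rightarrow> bipartition \<Rightarrow> bipartition \<Rightarrow> bool" where
  "E_equiv k n m al be \<longleftrightarrow>
     (\<forall>r\<ge>1. b_fun r al k (of_nat n + inverse k * of_nat m) = b_fun r be k (of_nat n + inverse k * of_nat m))"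

definition E_class :: "complex \<Rightarrow> nat \<Rightarrow> nat \<Rightarrow> bipartition \<Rightarrow> bipartition set" where
  "E_class k n m al = {be. is_bipartition be \<and> E_equiv k n m al be}"

definition adjacent :: "box \<Rightarrow> box \<Rightarrow> bool" where
  "adjacent x y \<longleftrightarrow>
     (fst x = fst y \<and> (snd x = snd y + 1 \<or> snd y = snd x + 1)) \<or>
     (snd x = snd y \<and> (fst x = fst y + 1 \<or> fst y = fst x + 1))"

definition components :: "box set \<Rightarrow> box set set" where
  "components S = (\<lambda>x. {y \<in> S. (x, y) \<in> {(u, v). u \<in> S \<and> v \<in> S \<and> adjacent u v}\<^sup>*}) ` S"

definition g_fun :: "complex \<Rightarrow> nat \<Rightarrow> box set \<Rightarrow> complex" where
  "g_fun k s nu = (\<Sum>x\<in>nu. cont k x 0 ^ (s - 1))"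

end

theory Submission
  imports Defs
begin

text \<open>Write c(x) = (j-1) + k(i-1). The matrix is the moment matrix (\<Sum>x\<in>\<nu>_t. c(x)^s), so its
  determinant is the value at k of a polynomial with integer coefficients, and since k is
  transcendental it suffices to find one integer N at which this polynomial does not vanish.
  Distinct components of the skew diagram occupy disjoint intervals of rows; for N larger
  than every column index, the contents (j-1) + N(i-1) of different components then form
  separated intervals of integers. A moment matrix (\<Sum>x\<in>G_t. w(x) c(x)^s) with positive
  weights and separated groups has nonzero determinant: expanding along the column of the
  lowest group G_j and eliminating the resulting column of powers c(y)^s yields
  \<plusminus>\<Sum>y\<in>G_j. w(y) D(y), where D(y) is a smaller determinant of the same kind with positive
  weights w(x)(c(x) - c(y)), and by induction the sign of such a determinant depends only
  on the relative order of its groups.\<close>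

lemma det_sum_column:
  fixes A :: "'a::comm_ring_1 mat"
  assumes A: "A \<in> carrier_mat n n" and j: "j < n"
    and B: "\<And>y. y \<in> Y \<Longrightarrow> B y \<in> carrier_mat n n"
    and off_column: "\<And>y i l. y \<in> Y \<Longrightarrow> i < n \<Longrightarrow> l < n \<Longrightarrow> l \<noteq> j \<Longrightarrow> B y $$ (i, l) = A $$ (i, l)"
    and column: "\<And>i. i < n \<Longrightarrow> A $$ (i, j) = (\<Sum>y\<in>Y. f y * B y $$ (i, j))"
  shows "det A = (\<Sum>y\<in>Y. f y * det (B y))"
proof -
  have "mat_delete (B y) i j = mat_delete A i j" if "y \<in> Y" for y i
    using A B[OF that] j by (intro eq_matI) (auto simp: mat_delete_def off_column[OF that])
  then have cofactor_eq: "cofactor (B y) i j = cofactor A i j" if "y \<in> Y" for y i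
    using that by (simp add: cofactor_def)
  have "det A = (\<Sum>i<n. A $$ (i, j) * cofactor A i j)"
    by (rule laplace_expansion_column[OF A j])
  also have "\<dots> = (\<Sum>i<n. \<Sum>y\<in>Y. f y * (B y $$ (i, j) * cofactor (B y) i j))"
    by (intro sum.cong) (auto simp: column sum_distrib_right cofactor_eq mult.assoc intro!: sum.cong)
  also have "\<dots> = (\<Sum>y\<in>Y. f y * det (B y))"
    by (subst sum.swap) (simp add: sum_distrib_left laplace_expansion_column[OF B j])
  finally show ?thesis .
qed

text \<open>Subtracting a times each row from the next one clears the column of powers of a
  except for its top entry.\<close>
lemma det_power_column:
  fixes a :: "'a::comm_ring_1" and B :: "'a mat"
  assumes B: "B \<in> carrier_mat (Suc n) (Suc n)" and j: "j < Suc n"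
    and column: "\<And>i. i < Suc n \<Longrightarrow> B $$ (i, j) = a ^ i"
  shows "det B = (-1) ^ j *
    det (mat n n (\<lambda>(i, t). B $$ (Suc i, insert_index j t) - a * B $$ (i, insert_index j t)))"
proof -
  define L where "L = mat (Suc n) (Suc n) (\<lambda>(i, l). if i = l then 1 else if i = Suc l then - a else 0)"
  have L: "L \<in> carrier_mat (Suc n) (Suc n)" unfolding L_def by auto
  have "det L = prod_list (diag_mat L)"
    by (rule det_lower_triangular[OF _ L]) (auto simp: L_def)
  also have "\<dots> = 1"
    unfolding prod_list_diag_prod using L by (auto simp: L_def intro!: prod.neutral)
  finally have det_L: "det L = 1" .
  define C where "C = L * B"
  have C: "C \<in> carrier_mat (Suc n) (Suc n)" unfolding C_def using L B by auto
  have C_entry: "C $$ (i, t) = B $$ (i, t) - (if i = 0 then 0 else a * B $$ (i - 1, t))"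
    if i: "i < Suc n" and t: "t < Suc n" for i t
  proof -
    have "C $$ (i, t) = (\<Sum>l<Suc n. L $$ (i, l) * B $$ (l, t))"
      unfolding C_def using L B i t by (simp add: scalar_prod_def atLeast0LessThan)
    also have "\<dots> = (\<Sum>l<Suc n. (if l = i then B $$ (l, t) else 0) + (if Suc l = i then - a * B $$ (l, t) else 0))"
      by (rule sum.cong) (auto simp: L_def i)
    also have "\<dots> = B $$ (i, t) - (if i = 0 then 0 else a * B $$ (i - 1, t))"
      unfolding sum.distrib using i by (cases i) auto
    finally show ?thesis .
  qed
  have "mat_delete C 0 j =
      mat n n (\<lambda>(i, t). B $$ (Suc i, insert_index j t) - a * B $$ (i, insert_index j t))"
    using C by (intro eq_matI) (auto simp: mat_delete_def C_entry insert_index_def)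
  then have cofactor_C: "cofactor C 0 j = (-1) ^ j *
      det (mat n n (\<lambda>(i, t). B $$ (Suc i, insert_index j t) - a * B $$ (i, insert_index j t)))"
    by (simp add: cofactor_def)
  have "det B = det C"
    unfolding C_def using det_mult[OF L B] det_L by simp
  also have "\<dots> = (\<Sum>i<Suc n. C $$ (i, j) * cofactor C i j)"
    by (rule laplace_expansion_column[OF C j])
  also have "\<dots> = cofactor C 0 j"
    unfolding sum.lessThan_Suc_shift using C_entry j column by simp
  also note cofactor_C
  finally show ?thesis .
qed

definition moment_mat :: "nat \<Rightarrow> (nat \<Rightarrow> 'x set) \<Rightarrow> ('x \<Rightarrow> 'a::comm_ring_1) \<Rightarrow> ('x \<Rightarrow> 'a) \<Rightarrow> 'a mat" where
  "moment_mat r G w c = mat r r (\<lambda>(s, t). \<Sum>x\<in>G t. w x * c x ^ s)"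

definition precedes :: "(nat \<Rightarrow> 'x set) \<Rightarrow> ('x \<Rightarrow> 'a::linorder) \<Rightarrow> nat \<Rightarrow> nat \<Rightarrow> bool" where
  "precedes G c t t' \<longleftrightarrow> (\<forall>x\<in>G t. \<forall>x'\<in>G t'. c x < c x')"

definition separated_family ::
    "nat \<Rightarrow> (nat \<Rightarrow> 'x set) \<Rightarrow> ('x \<Rightarrow> 'a::linordered_idom) \<Rightarrow> ('x \<Rightarrow> 'a) \<Rightarrow> bool" where
  "separated_family r G w c \<longleftrightarrow>
     (\<forall>t<r. finite (G t) \<and> G t \<noteq> {} \<and> (\<forall>x\<in>G t. 0 < w x)) \<and>
     (\<forall>t<r. \<forall>t'<r. t \<noteq> t' \<longrightarrow> precedes G c t t' \<or> precedes G c t' t)"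

lemma det_moment_mat_expand:
  assumes j: "j < Suc n"
  shows "det (moment_mat (Suc n) G w c) = (-1) ^ j *
    (\<Sum>y\<in>G j. w y * det (moment_mat n (G \<circ> insert_index j) (\<lambda>x. w x * (c x - c y)) c))"
proof -
  define B where
    "B y = mat (Suc n) (Suc n) (\<lambda>(s, t). if t = j then c y ^ s else \<Sum>x\<in>G t. w x * c x ^ s)" for y
  have "det (moment_mat (Suc n) G w c) = (\<Sum>y\<in>G j. w y * det (B y))"
    by (rule det_sum_column[OF _ j]) (auto simp: moment_mat_def B_def sum_distrib_left j)
  also have "\<dots> = (\<Sum>y\<in>G j. w y * ((-1) ^ j *
      det (moment_mat n (G \<circ> insert_index j) (\<lambda>x. w x * (c x - c y)) c)))"
  proof (rule sum.cong[OF refl])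
    fix y
    have "(\<Sum>x\<in>G i. w x * (c x * c x ^ s)) - c y * (\<Sum>x\<in>G i. w x * c x ^ s) =
        (\<Sum>x\<in>G i. w x * (c x - c y) * c x ^ s)" for i s
      by (simp add: sum_distrib_left algebra_simps flip: sum_subtractf)
    then have "mat n n (\<lambda>(i, t). B y $$ (Suc i, insert_index j t) - c y * B y $$ (i, insert_index j t)) =
        moment_mat n (G \<circ> insert_index j) (\<lambda>x. w x * (c x - c y)) c"
      by (intro eq_matI) (auto simp: moment_mat_def B_def insert_index_def)
    moreover have "det (B y) = (-1) ^ j *
        det (mat n n (\<lambda>(i, t). B y $$ (Suc i, insert_index j t) - c y * B y $$ (i, insert_index j t)))"
      by (rule det_power_column[OF _ j]) (auto simp: B_def j)
    ultimately show "w y * det (B y) = w y * ((-1) ^ j *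
        det (moment_mat n (G \<circ> insert_index j) (\<lambda>x. w x * (c x - c y)) c))"
      by simp
  qed
  finally show ?thesis by (simp add: sum_distrib_left algebra_simps)
qed

lemma separated_family_least_group:
  assumes sep: "separated_family (Suc n) G w c"
  obtains j where "j < Suc n" "\<And>t. t < Suc n \<Longrightarrow> t \<noteq> j \<Longrightarrow> precedes G c j t"
proof -
  define least where "least t = Min (c ` G t)" for t
  have least_in: "least t \<in> c ` G t" if "t < Suc n" for t
    unfolding least_def using sep that by (intro Min_in) (auto simp: separated_family_def)
  have "Min (least ` {..n}) \<in> least ` {..n}"
    by (rule Min_in) auto
  then obtain j where j: "j \<le> n" "least j = Min (least ` {..n})"
    by (metis atMost_iff imageE)
  have least_le: "least j \<le> least t" if "t < Suc n" for t
    unfolding j(2) using that by simp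
  have not_precedes: "\<not> precedes G c t j" if "t < Suc n" for t
  proof
    assume "precedes G c t j"
    with least_in[OF that] least_in[of j] j(1) have "least t < least j"
      by (auto simp: precedes_def)
    with least_le[OF that] show False by simp
  qed
  show ?thesis
  proof (rule that)
    show j_less: "j < Suc n" using j(1) by simp
    fix t assume "t < Suc n" "t \<noteq> j"
    then show "precedes G c j t"
      using sep j_less not_precedes unfolding separated_family_def by blast
  qed
qed

lemma separated_family_remove_least:
  assumes sep: "separated_family (Suc n) G w c" and j: "j < Suc n"
    and least: "\<And>t. t < Suc n \<Longrightarrow> t \<noteq> j \<Longrightarrow> precedes G c j t"
    and y: "y \<in> G j"
  shows "separated_family n (G \<circ> insert_index j) (\<lambda>x. w x * (c x - c y)) c"
  unfolding separated_family_def
proof (intro conjI allI impI ballI)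
  fix t assume t: "t < n"
  then have t': "insert_index j t < Suc n" "insert_index j t \<noteq> j"
    by (auto simp: insert_index_def)
  then show "finite ((G \<circ> insert_index j) t)" "(G \<circ> insert_index j) t \<noteq> {}"
    using sep by (auto simp: separated_family_def)
  fix x assume "x \<in> (G \<circ> insert_index j) t"
  with t' sep least[OF t'] y show "0 < w x * (c x - c y)"
    by (auto simp: separated_family_def precedes_def)
next
  fix t t' assume "t < n" "t' < n" "t \<noteq> t'"
  then have "insert_index j t < Suc n" "insert_index j t' < Suc n"
    "insert_index j t \<noteq> insert_index j t'"
    using inj_on_eq_iff[OF insert_index_inj_on[of j UNIV]] by (simp_all add: insert_index_def)
  with sep show "precedes (G \<circ> insert_index j) c t t' \<or> precedes (G \<circ> insert_index j) c t' t"
    by (simp add: separated_family_def precedes_def)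
qed

lemma det_moment_mat_same_sign:
  fixes w c :: "'x \<Rightarrow> 'a::linordered_idom" and w' c' :: "'y \<Rightarrow> 'a"
  assumes "separated_family r G w c" "separated_family r G' w' c'"
    and "\<And>t t'. t < r \<Longrightarrow> t' < r \<Longrightarrow> precedes G c t t' = precedes G' c' t t'"
  shows "0 < det (moment_mat r G w c) * det (moment_mat r G' w' c')"
  using assms
proof (induction r arbitrary: G w c G' w' c')
  case 0
  then show ?case by (simp add: moment_mat_def)
next
  case (Suc n)
  obtain j where j: "j < Suc n" and least: "\<And>t. t < Suc n \<Longrightarrow> t \<noteq> j \<Longrightarrow> precedes G c j t"
    using separated_family_least_group[OF Suc.prems(1)] by blast
  have least': "\<And>t. t < Suc n \<Longrightarrow> t \<noteq> j \<Longrightarrow> precedes G' c' j t"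
    using least Suc.prems(3) j by auto
  define d where "d y = det (moment_mat n (G \<circ> insert_index j) (\<lambda>x. w x * (c x - c y)) c)" for y
  define d' where "d' y = det (moment_mat n (G' \<circ> insert_index j) (\<lambda>x. w' x * (c' x - c' y)) c')" for y
  have term_pos: "0 < (w y * d y) * (w' y' * d' y')" if y: "y \<in> G j" and y': "y' \<in> G' j" for y y'
  proof -
    have "0 < d y * d' y'"
      unfolding d_def d'_def
    proof (rule Suc.IH)
      show "separated_family n (G \<circ> insert_index j) (\<lambda>x. w x * (c x - c y)) c"
        by (rule separated_family_remove_least[OF Suc.prems(1) j least y])
      show "separated_family n (G' \<circ> insert_index j) (\<lambda>x. w' x * (c' x - c' y')) c'"
        by (rule separated_family_remove_least[OF Suc.prems(2) j least' y'])
      fix t t' assume "t < n" "t' < n"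
      then show "precedes (G \<circ> insert_index j) c t t' = precedes (G' \<circ> insert_index j) c' t t'"
        using Suc.prems(3)[of "insert_index j t" "insert_index j t'"]
        by (auto simp: precedes_def insert_index_def)
    qed
    moreover have "0 < w y" "0 < w' y'"
      using Suc.prems(1,2) j y y' by (auto simp: separated_family_def)
    ultimately show ?thesis
      by (metis mult.commute mult.left_commute mult_pos_pos)
  qed
  have groups: "finite (G j)" "G j \<noteq> {}" "finite (G' j)" "G' j \<noteq> {}"
    using Suc.prems(1,2) j by (auto simp: separated_family_def)
  have "det (moment_mat (Suc n) G w c) * det (moment_mat (Suc n) G' w' c') =
      ((-1) ^ j * (-1) ^ j) * ((\<Sum>y\<in>G j. w y * d y) * (\<Sum>y'\<in>G' j. w' y' * d' y'))"
    unfolding det_moment_mat_expand[OF j] d_def d'_def by (simp add: algebra_simps)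
  also have "\<dots> = (\<Sum>y\<in>G j. \<Sum>y'\<in>G' j. (w y * d y) * (w' y' * d' y'))"
    by (simp add: sum_product flip: power_mult_distrib)
  also have "0 < \<dots>"
    using groups term_pos by (intro sum_pos) auto
  finally show ?case .
qed

lemma det_moment_mat_nonzero:
  "separated_family r G w c \<Longrightarrow> det (moment_mat r G w c) \<noteq> 0"
  using det_moment_mat_same_sign[of r G w c G w c] by fastforce

lemma comm_ring_hom_poly_eval: "comm_ring_hom (\<lambda>p. poly p z)"
  by unfold_locales auto

lemma comm_ring_hom_map_poly_of_int: "comm_ring_hom (map_poly (of_int :: int \<Rightarrow> 'a::comm_ring_1))"
  by unfold_locales (auto intro!: poly_eqI simp: coeff_map_poly coeff_mult)

lemma det_linear_moment_mat_transcendental: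
  fixes k :: complex and N :: int and a b :: "'x \<Rightarrow> nat"
  assumes k: "\<not> algebraic k"
    and at_N: "det (mat r r (\<lambda>(s, t). \<Sum>x\<in>G t. (int (a x) + N * int (b x)) ^ s)) \<noteq> 0"
  shows "det (mat r r (\<lambda>(s, t). \<Sum>x\<in>G t. (of_nat (a x) + k * of_nat (b x)) ^ s)) \<noteq> 0"
proof -
  define P where "P = mat r r (\<lambda>(s, t). \<Sum>x\<in>G t. [:int (a x), int (b x):] ^ s)"
  interpret eval_N: comm_ring_hom "\<lambda>p. poly p N"
    by (rule comm_ring_hom_poly_eval)
  interpret eval_k: comm_ring_hom "\<lambda>p. poly p k"
    by (rule comm_ring_hom_poly_eval)
  interpret embed: comm_ring_hom "map_poly (of_int :: int \<Rightarrow> complex)"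
    by (rule comm_ring_hom_map_poly_of_int)
  have "map_mat (\<lambda>p. poly p N) P = mat r r (\<lambda>(s, t). \<Sum>x\<in>G t. (int (a x) + N * int (b x)) ^ s)"
    unfolding P_def by (intro eq_matI) (auto simp: poly_sum poly_power algebra_simps)
  then have "poly (det P) N \<noteq> 0"
    using at_N eval_N.hom_det[of P] by simp
  then have nonzero: "map_poly of_int (det P) \<noteq> (0 :: complex poly)"
    by (auto simp: map_poly_eq_0_iff)
  have "map_mat (\<lambda>p. poly p k) (map_mat (map_poly of_int) P) =
      mat r r (\<lambda>(s, t). \<Sum>x\<in>G t. (of_nat (a x) + k * of_nat (b x)) ^ s)"
    unfolding P_def
    by (intro eq_matI) (auto simp: embed.hom_sum embed.hom_power map_poly_pCons poly_sum poly_power algebra_simps)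
  then have "det (mat r r (\<lambda>(s, t). \<Sum>x\<in>G t. (of_nat (a x) + k * of_nat (b x)) ^ s)) =
      poly (map_poly of_int (det P)) k"
    using eval_k.hom_det embed.hom_det by metis
  then show ?thesis
    using k nonzero by (auto intro!: algebraicI[of "map_poly of_int (det P)"] simp: coeff_map_poly)
qed

lemma ordered_if_convex_disjoint:
  fixes I J :: "'a::linorder set"
  assumes I: "\<And>a b x. a \<in> I \<Longrightarrow> b \<in> I \<Longrightarrow> a \<le> x \<Longrightarrow> x \<le> b \<Longrightarrow> x \<in> I"
    and J: "\<And>a b x. a \<in> J \<Longrightarrow> b \<in> J \<Longrightarrow> a \<le> x \<Longrightarrow> x \<le> b \<Longrightarrow> x \<in> J"
    and disjoint: "I \<inter> J = {}"
  shows "(\<forall>a\<in>I. \<forall>b\<in>J. a < b) \<or> (\<forall>a\<in>I. \<forall>b\<in>J. b < a)"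
proof (rule ccontr)
  assume "\<not> ?thesis"
  then obtain a b a' b' where "a \<in> I" "b \<in> J" "b \<le> a" "a' \<in> I" "b' \<in> J" "a' \<le> b'"
    by (auto simp: not_less)
  then show False
    using I[of a' a b'] J[of b b' a] disjoint by (cases "b' \<le> a") auto
qed

definition adjacency :: "box set \<Rightarrow> box rel" where
  "adjacency S = {(u, v). u \<in> S \<and> v \<in> S \<and> adjacent u v}"

lemma components_adjacency: "components S = (\<lambda>x. {y \<in> S. (x, y) \<in> (adjacency S)\<^sup>*}) ` S"
  by (simp add: components_def adjacency_def)

lemma components_nonempty_subset: "A \<in> components S \<Longrightarrow> A \<noteq> {} \<and> A \<subseteq> S"
  by (auto simp: components_adjacency)

lemma sym_adjacency_rtrancl: "sym ((adjacency S)\<^sup>*)"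
  by (rule sym_rtrancl) (auto simp: sym_def adjacency_def adjacent_def)

lemma adjacency_rtrancl_in: "(u, v) \<in> (adjacency S)\<^sup>* \<Longrightarrow> u \<in> S \<Longrightarrow> v \<in> S"
  by (induction rule: rtrancl_induct) (auto simp: adjacency_def)

text \<open>A path of adjacent boxes changes the row index by at most one at each step.\<close>
lemma adjacency_rtrancl_rows_between:
  assumes "(u, v) \<in> (adjacency S)\<^sup>*" and "fst u \<le> i" "i \<le> fst v"
  shows "\<exists>z. (u, z) \<in> (adjacency S)\<^sup>* \<and> fst z = i"
  using assms
proof (induction arbitrary: i rule: rtrancl_induct)
  case base
  then show ?case by (intro exI[of _ u]) simp
next
  case (step y v)
  show ?case
  proof (cases "i \<le> fst y")
    case True
    then show ?thesis using step by blast
  next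
    case False
    with step have "i = fst v"
      by (auto simp: adjacency_def adjacent_def)
    then show ?thesis using step(1,2) by (blast intro: rtrancl_into_rtrancl)
  qed
qed

lemma component_eq_reachable:
  assumes "A \<in> components S" "a \<in> A"
  shows "A = {y \<in> S. (a, y) \<in> (adjacency S)\<^sup>*}"
proof -
  obtain x where "x \<in> S" "A = {y \<in> S. (x, y) \<in> (adjacency S)\<^sup>*}"
    using assms(1) by (auto simp: components_adjacency)
  with assms(2) sym_adjacency_rtrancl show ?thesis
    by (auto dest: symD intro: rtrancl_trans)
qed

lemma partition_row_closed:
  assumes P: "is_partition P" and "(i, j) \<in> P" "1 \<le> l" "l \<le> j"
  shows "(i, l) \<in> P"
  using assms(4,2)
proof (induction rule: inc_induct)
  case (step n)
  with \<open>1 \<le> l\<close> P show ?case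
    unfolding is_partition_def by fastforce
qed

lemma partition_box_ge1: "is_partition P \<Longrightarrow> x \<in> P \<Longrightarrow> 1 \<le> fst x \<and> 1 \<le> snd x"
  unfolding is_partition_def by auto

lemma skew_row_segment_connected:
  assumes P: "is_partition P" and Q: "is_partition Q"
    and u: "(i, j) \<in> P - Q" and v: "(i, j') \<in> P - Q" and "j \<le> j'"
  shows "((i, j), (i, j')) \<in> (adjacency (P - Q))\<^sup>*"
proof -
  have "1 \<le> j" using partition_box_ge1[OF P, of "(i, j)"] u by simp
  have between: "(i, l) \<in> P - Q" if "j \<le> l" "l \<le> j'" for l
    using partition_row_closed[OF P, of i j' l] partition_row_closed[OF Q, of i l j]
      u v that \<open>1 \<le> j\<close> by auto
  from \<open>j \<le> j'\<close> show ?thesis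
  proof (induction rule: dec_induct)
    case (step l)
    then have "((i, l), (i, Suc l)) \<in> adjacency (P - Q)"
      using between by (auto simp: adjacency_def adjacent_def)
    with step.IH show ?case by (rule rtrancl_into_rtrancl)
  qed simp
qed

lemma skew_same_row_connected:
  assumes P: "is_partition P" and Q: "is_partition Q"
    and "u \<in> P - Q" "v \<in> P - Q" "fst u = fst v"
  shows "(u, v) \<in> (adjacency (P - Q))\<^sup>*"
proof (cases "snd u \<le> snd v")
  case True
  then show ?thesis
    using skew_row_segment_connected[OF P Q, of "fst u" "snd u" "snd v"] assms
    by (cases u, cases v) auto
next
  case False
  then have "(v, u) \<in> (adjacency (P - Q))\<^sup>*"
    using skew_row_segment_connected[OF P Q, of "fst u" "snd v" "snd u"] assms
    by (cases u, cases v) auto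
  then show ?thesis
    using sym_adjacency_rtrancl by (auto dest: symD)
qed

text \<open>Distinct components of a skew diagram share no row (a row of a skew diagram is a segment),
  and the rows met by a component form an interval; hence they lie in disjoint row ranges.\<close>
lemma skew_components_row_separated:
  assumes P: "is_partition P" and Q: "is_partition Q"
    and A: "A \<in> components (P - Q)" and B: "B \<in> components (P - Q)" and "A \<noteq> B"
  shows "(\<forall>a\<in>A. \<forall>b\<in>B. fst a < fst b) \<or> (\<forall>a\<in>A. \<forall>b\<in>B. fst b < fst a)"
proof -
  have rows_convex: "i \<in> fst ` C"
    if C: "C \<in> components (P - Q)" and "c \<in> C" "c' \<in> C" and le: "fst c \<le> i" "i \<le> fst c'" for C c c' i
  proof -
    have "(c, c') \<in> (adjacency (P - Q))\<^sup>*"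
      using component_eq_reachable[OF C \<open>c \<in> C\<close>] \<open>c' \<in> C\<close> by blast
    then obtain z where "(c, z) \<in> (adjacency (P - Q))\<^sup>*" "fst z = i"
      using adjacency_rtrancl_rows_between le by blast
    moreover have "c \<in> P - Q"
      using component_eq_reachable[OF C \<open>c \<in> C\<close>] \<open>c \<in> C\<close> by blast
    ultimately show ?thesis
      using component_eq_reachable[OF C \<open>c \<in> C\<close>] adjacency_rtrancl_in by blast
  qed
  have "fst ` A \<inter> fst ` B = {}"
  proof (rule ccontr)
    assume "fst ` A \<inter> fst ` B \<noteq> {}"
    then obtain a b where ab: "a \<in> A" "b \<in> B" "fst a = fst b" by auto
    have "a \<in> P - Q" "b \<in> P - Q"
      using component_eq_reachable[OF A \<open>a \<in> A\<close>] component_eq_reachable[OF B \<open>b \<in> B\<close>] ab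
      by blast+
    then have "(a, b) \<in> (adjacency (P - Q))\<^sup>*"
      using skew_same_row_connected[OF P Q] ab(3) by blast
    then have "A = B"
      using component_eq_reachable[OF A \<open>a \<in> A\<close>] component_eq_reachable[OF B \<open>b \<in> B\<close>]
        sym_adjacency_rtrancl by (auto dest: symD intro: rtrancl_trans)
    with \<open>A \<noteq> B\<close> show False ..
  qed
  then show ?thesis
    using ordered_if_convex_disjoint[of "fst ` A" "fst ` B"] rows_convex[OF A] rows_convex[OF B]
    by blast
qed

lemma mixed_radix_less:
  fixes a a' b b' N :: nat
  assumes "a < N" "b < b'"
  shows "a + N * b < a' + N * b'"
proof -
  have "N * Suc b \<le> N * b'"
    using assms(2) by (intro mult_le_mono2) simp
  then show ?thesis
    using assms(1) by simp
qed

lemma separated_family_skew_components: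
  assumes P: "is_partition P" and Q: "is_partition Q"
    and nus: "distinct nus" "set nus = components (P - Q)"
    and N: "\<And>x. x \<in> P - Q \<Longrightarrow> snd x \<le> N"
  shows "separated_family (length nus) ((!) nus) (\<lambda>_. 1 :: int)
    (\<lambda>x. int (snd x - 1) + int N * int (fst x - 1))" (is "separated_family _ _ _ ?c")
  unfolding separated_family_def
proof (intro conjI allI impI)
  have finite: "finite (P - Q)"
    using P by (simp add: is_partition_def)
  fix t assume "t < length nus"
  then have "nus ! t \<in> components (P - Q)"
    using nus(2) nth_mem by blast
  then show "finite (nus ! t)" "nus ! t \<noteq> {}" "\<forall>x\<in>nus ! t. (0::int) < 1"
    using components_nonempty_subset[of "nus ! t"] finite finite_subset by auto
next
  fix t t' assume t: "t < length nus" "t' < length nus" "t \<noteq> t'"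
  then have components: "nus ! t \<in> components (P - Q)" "nus ! t' \<in> components (P - Q)"
    "nus ! t \<noteq> nus ! t'"
    using nus nth_mem nth_eq_iff_index_eq by blast+
  have content_less: "?c x < ?c y" if "x \<in> P - Q" "fst x < fst y" for x y
  proof -
    have "snd x - 1 + N * (fst x - 1) < snd y - 1 + N * (fst y - 1)"
      using N[OF that(1)] partition_box_ge1[OF P, of x] that by (intro mixed_radix_less) auto
    then show ?thesis
      by (metis of_nat_add of_nat_mult of_nat_less_iff)
  qed
  show "precedes ((!) nus) ?c t t' \<or> precedes ((!) nus) ?c t' t"
    using skew_components_row_separated[OF P Q components] components_nonempty_subset[OF components(1)]
      components_nonempty_subset[OF components(2)] content_less
    unfolding precedes_def by blast
qed

theorem mainTheorem12:
  fixes k :: complex and n m :: nat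
    and E :: "bipartition set" and al alm alM :: bipartition
    and nus :: "box set list"
  assumes k_trans: "\<not> algebraic k"
    and n_pos: "n > 0" and m_pos: "m > 0"
    and al_bip: "is_bipartition al"
    and E_def: "E = E_class k n m al"
    and min_mem: "alm \<in> E" and min_min: "\<forall>be\<in>E. bip_le be alm \<longrightarrow> be = alm"
    and max_mem: "alM \<in> E" and max_max: "\<forall>be\<in>E. bip_le alM be \<longrightarrow> be = alM"
    and nus_dist: "distinct nus"
    and nus_set: "set nus = components (fst alM - fst alm)"
  shows "det (mat (length nus) (length nus) (\<lambda>(s, t). g_fun k (s + 1) (nus ! t))) \<noteq> 0"
proof -
  have P: "is_partition (fst alM)" and Q: "is_partition (fst alm)"
    using max_mem min_mem by (auto simp: E_def E_class_def is_bipartition_def)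
  have "finite (snd ` (fst alM - fst alm))"
    using P by (simp add: is_partition_def)
  then obtain N where "\<And>x. x \<in> fst alM - fst alm \<Longrightarrow> snd x \<le> N"
    using finite_nat_set_iff_bounded_le by auto
  from separated_family_skew_components[OF P Q nus_dist nus_set this]
  have "det (mat (length nus) (length nus) (\<lambda>(s, t). \<Sum>x\<in>nus ! t.
      (int (snd x - 1) + int N * int (fst x - 1)) ^ s)) \<noteq> 0"
    using det_moment_mat_nonzero by (fastforce simp: moment_mat_def)
  from det_linear_moment_mat_transcendental[OF k_trans this]
  show ?thesis
    by (simp add: g_fun_def cont_def)
qed

end
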